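(* Let $\mathcal{H}$ be a hypertree and $T$ a host tree of $\mathcal{H}$. Then $\mathcal{H}$ is a basic hypertree if and only if for every edge $uv$ of $T$ and every vertex $x\notin I_\mathcal{H}(uv)$ there exists a vertex $y$ such that some edge of $\mathcal{H}$ contains $\{u,v,y\}$ and no edge of $\mathcal{H}$ contains $\{x,y\}$. Equivalently, $\mathcal{H}$ is basic if and only if for every basic set $B$ of $\mathcal{H}$ and every vertex $x\notin B$ there exists a vertex $y$ such that some edge of $\mathcal{H}$ contains $B\cup\{y\}$ and no edge of $\mathcal{H}$ contains $\{x,y\}$.
   Context: A hypergraph $\mathcal{H}$ has a finite vertex set $V(\mathcal{H})$ and a finite family of nonempty subsets (edges). A host tree of $\mathcal{H}$ is a tree on $V(\mathcal{H})$ in which every edge induces a connected subgraph; a hypertree is a hypergraph with a host tree. Hypergraphs on the same vertex set are equivalent if they have the same host trees. $\mathcal{N}(\mathcal{H})$ is the hypergraph on $V(\mathcal{H})$ having, for each $v\in V(\mathcal{H})$, the edge equal to the union of all edges of $\mathcal{H}$ containing $v$. A basic hypertree is a hypertree $\mathcal{H}$ equivalent to $\mathcal{N}(\mathcal{H})$. For $V'\subseteq V(\mathcal{H})$, $I_\mathcal{H}(V')$ is the intersection of all edges containing $V'$, or $V(\mathcal{H})$ if none does; $I_\mathcal{H}(uv)=I_\mathcal{H}(\{u,v\})$. A union of sets is connected if the intersection graph of the sets is connected. $Comp(\mathcal{H})$ is the hypergraph without repeated edges on $V(\mathcal{H})$ whose edges are $V(\mathcal{H})$, all singletons, and all proper subsets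 obtainable from edges of $\mathcal{H}$ by repeated nonempty intersections and connected unions; a basic set of $\mathcal{H}$ is an edge of $Comp(\mathcal{H})$ with more than one vertex that is not a connected union of strictly smaller edges of $Comp(\mathcal{H})$. *)

theory Defs
  imports Main
begin

text \<open>A hypergraph is given by a finite vertex set V and a finite family E of
nonempty subsets of V (repetitions of edges are irrelevant for all notions used).\<close>

definition hypergraph :: "'a set \<Rightarrow> 'a set set \<Rightarrow> bool" where
  "hypergraph V E \<longleftrightarrow> finite V \<and> finite E \<and> (\<forall>e\<in>E. e \<noteq> {} \<and> e \<subseteq> V)"

definition adj_in :: "'a set set \<Rightarrow> 'a set \<Rightarrow> ('a \<times> 'a) set" where
  "adj_in T S = {(u, v). u \<in> S \<and> v \<in> S \<and> {u, v} \<in> T}"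

text \<open>S induces a connected subgraph of T (vacuously true for S = {}).\<close>
definition induces_connected :: "'a set set \<Rightarrow> 'a set \<Rightarrow> bool" where
  "induces_connected T S \<longleftrightarrow> (\<forall>u\<in>S. \<forall>v\<in>S. (u, v) \<in> (adj_in T S)\<^sup>*)"

text \<open>A tree on V: a graph on V that is connected and acyclic; acyclicity is
expressed as: no edge {u,v} lies on a cycle, i.e. removing it disconnects u from v.\<close>
definition tree_on :: "'a set \<Rightarrow> 'a set set \<Rightarrow> bool" where
  "tree_on V T \<longleftrightarrow> finite V \<and> V \<noteq> {} \<and>
     (\<forall>e\<in>T. \<exists>u v. u \<noteq> v \<and> u \<in> V \<and> v \<in> V \<and> e = {u, v}) \<and>
     induces_connected T V \<and>
     (\<forall>u v. {u, v} \<in> T \<longrightarrow> (u, v) \<notin> (adj_in (T - {{u, v}}) V)\<^sup>*)"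

definition host_tree :: "'a set \<Rightarrow> 'a set set \<Rightarrow> 'a set set \<Rightarrow> bool" where
  "host_tree V E T \<longleftrightarrow> tree_on V T \<and> (\<forall>e\<in>E. induces_connected T e)"

definition hypertree :: "'a set \<Rightarrow> 'a set set \<Rightarrow> bool" where
  "hypertree V E \<longleftrightarrow> hypergraph V E \<and> (\<exists>T. host_tree V E T)"

definition equivalent :: "'a set \<Rightarrow> 'a set set \<Rightarrow> 'a set set \<Rightarrow> bool" where
  "equivalent V E E' \<longleftrightarrow> (\<forall>T. host_tree V E T \<longleftrightarrow> host_tree V E' T)"

definition NH :: "'a set \<Rightarrow> 'a set set \<Rightarrow> 'a set set" where
  "NH V E = {\<Union>{e\<in>E. v \<in> e} | v. v \<in> V}"

definition basic_hypertree :: "'a set \<Rightarrow> 'a set set \<Rightarrow> bool" where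
  "basic_hypertree V E \<longleftrightarrow> hypertree V E \<and> equivalent V E (NH V E)"

definition IH :: "'a set \<Rightarrow> 'a set set \<Rightarrow> 'a set \<Rightarrow> 'a set" where
  "IH V E V' = (if \<exists>e\<in>E. V' \<subseteq> e then \<Inter>{e\<in>E. V' \<subseteq> e} else V)"

text \<open>A union of a family F of sets is connected if the intersection graph of F is connected.\<close>
definition connected_family :: "'a set set \<Rightarrow> bool" where
  "connected_family F \<longleftrightarrow> F \<noteq> {} \<and> finite F \<and>
     (\<forall>A\<in>F. \<forall>B\<in>F. (A, B) \<in> {(X, Y). X \<in> F \<and> Y \<in> F \<and> X \<inter> Y \<noteq> {}}\<^sup>*)"

inductive_set comp_gen :: "'a set set \<Rightarrow> 'a set set" for E :: "'a set set" where
  edge: "e \<in> E \<Longrightarrow> e \<in> comp_gen E"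
| inter: "A \<in> comp_gen E \<Longrightarrow> B \<in> comp_gen E \<Longrightarrow> A \<inter> B \<noteq> {} \<Longrightarrow> A \<inter> B \<in> comp_gen E"
| union: "\<forall>A\<in>F. A \<in> comp_gen E \<Longrightarrow> connected_family F \<Longrightarrow> \<Union>F \<in> comp_gen E"

text \<open>Edges of Comp(H) (as a set, so without repeated edges).\<close>
definition Comp :: "'a set \<Rightarrow> 'a set set \<Rightarrow> 'a set set" where
  "Comp V E = {V} \<union> {{v} | v. v \<in> V} \<union> {A \<in> comp_gen E. A \<subset> V}"

definition basic_set :: "'a set \<Rightarrow> 'a set set \<Rightarrow> 'a set \<Rightarrow> bool" where
  "basic_set V E B \<longleftrightarrow> B \<in> Comp V E \<and> card B > 1 \<and>
     \<not> (\<exists>F. F \<subseteq> Comp V E \<and> (\<forall>A\<in>F. A \<subset> B) \<and> connected_family F \<and> \<Union>F = B)"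

end

theory Submission
  imports Defs
begin

text \<open>Removing an edge \<open>uv\<close> of the host tree \<open>T\<close> splits it into two sides, and every subtree
  meeting both sides contains \<open>u\<close> and \<open>v\<close>.

  Every host tree of \<open>H\<close> hosts \<open>N(H)\<close>. Conversely, let \<open>T'\<close> host \<open>N(H)\<close> and let \<open>wz\<close> be an
  edge of \<open>T\<close> inside an edge \<open>e\<close> of \<open>H\<close>. The neighbourhoods \<open>N(y)\<close> of the vertices \<open>y\<close>
  sharing an edge with \<open>w\<close> and \<open>z\<close> are subtrees of \<open>T'\<close> containing \<open>w\<close> and \<open>z\<close>, and the
  condition says that their intersection lies in \<open>I(wz) \<subseteq> e\<close>; so \<open>e\<close> is a subtree of \<open>T'\<close>.
  If the condition fails for \<open>uv\<close> and \<open>x\<close>, with \<open>x\<close> on the side of \<open>v\<close>, then replacing \<open>uv\<close>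
  by \<open>ux\<close> gives a host tree of \<open>N(H)\<close> that disconnects an edge through \<open>u\<close> and \<open>v\<close> avoiding \<open>x\<close>.

  For the second characterisation, every basic set \<open>B \<noteq> V\<close> is \<open>I(uv)\<close> for a tree edge \<open>uv\<close>
  inside \<open>B\<close>, since otherwise the sets \<open>I(uv) \<inter> B\<close> decompose \<open>B\<close>; and a smallest set of
  \<open>Comp(H)\<close> containing a tree edge \<open>uv\<close> is a basic set inside \<open>I(uv)\<close>.\<close>

section \<open>Walks and connected vertex sets\<close>

definition component :: "'a set set \<Rightarrow> 'a set \<Rightarrow> 'a \<Rightarrow> 'a set" where
  "component G S a = {z. (a, z) \<in> (adj_in G S)\<^sup>*}"

lemma sym_adj_in: "sym (adj_in G S)"
  by (auto simp: sym_def adj_in_def insert_commute)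

lemma rtrancl_adj_in_sym: "(a, b) \<in> (adj_in G S)\<^sup>* \<Longrightarrow> (b, a) \<in> (adj_in G S)\<^sup>*"
  using sym_rtrancl[OF sym_adj_in] by (rule symD)

lemma adj_in_mono: "G \<subseteq> G' \<Longrightarrow> S \<subseteq> S' \<Longrightarrow> adj_in G S \<subseteq> adj_in G' S'"
  by (auto simp: adj_in_def)

lemma rtrancl_adj_in_mono:
  "(a, b) \<in> (adj_in G S)\<^sup>* \<Longrightarrow> G \<subseteq> G' \<Longrightarrow> S \<subseteq> S' \<Longrightarrow> (a, b) \<in> (adj_in G' S')\<^sup>*"
  using rtrancl_mono[OF adj_in_mono] by blast

lemma rtrancl_adj_in_mem:
  assumes "(a, b) \<in> (adj_in G S)\<^sup>*" "a \<noteq> b" shows "a \<in> S" "b \<in> S"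
  using assms by (auto simp: adj_in_def elim: converse_rtranclE rtranclE)

lemma adj_in_insert:
  "u \<in> S \<Longrightarrow> x \<in> S \<Longrightarrow> adj_in (insert {u, x} G) S = adj_in G S \<union> {(u, x), (x, u)}"
  by (auto simp: adj_in_def doubleton_eq_iff)

lemma rtrancl_exit_step:
  "(a, b) \<in> R\<^sup>* \<Longrightarrow> a \<in> C \<Longrightarrow> b \<notin> C \<Longrightarrow> \<exists>c d. c \<in> C \<and> d \<notin> C \<and> (c, d) \<in> R"
  by (induction rule: rtrancl_induct) auto

lemma rtrancl_Un_edge_cases:
  assumes "(a, b) \<in> (R \<union> {(u, x), (x, u)})\<^sup>*"
  shows "(a, b) \<in> R\<^sup>* \<or> (a, u) \<in> R\<^sup>* \<and> (x, b) \<in> R\<^sup>* \<or> (a, x) \<in> R\<^sup>* \<and> (u, b) \<in> R\<^sup>*"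
  using assms
proof (induction rule: rtrancl_induct)
  case (step y z)
  then show ?case by (auto intro: rtrancl_into_rtrancl)
qed simp

lemma component_self: "a \<in> component G S a"
  by (simp add: component_def)

lemma component_subset: "a \<in> S \<Longrightarrow> component G S a \<subseteq> S"
  unfolding component_def using rtrancl_adj_in_mem by fastforce

lemma components_disjoint:
  "b \<notin> component G S a \<Longrightarrow> component G S a \<inter> component G S b = {}"
  unfolding component_def by (auto dest: rtrancl_adj_in_sym intro: rtrancl_trans)

lemma component_Diff_exit:
  assumes walk: "(a, b) \<in> (adj_in G S)\<^sup>*" and out: "b \<notin> component G (S - {w}) a"
    and "a \<noteq> w"
  shows "\<exists>c. c \<in> component G (S - {w}) a \<and> {c, w} \<in> G"
proof -
  obtain c d where cd: "c \<in> component G (S - {w}) a" "d \<notin> component G (S - {w}) a"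
    "(c, d) \<in> adj_in G S"
    using rtrancl_exit_step[OF walk component_self out] by blast
  have "c \<noteq> w"
    using cd(1) \<open>a \<noteq> w\<close> rtrancl_adj_in_mem[of a c] by (auto simp: component_def)
  have "d = w"
  proof (rule ccontr)
    assume "d \<noteq> w"
    then have "(c, d) \<in> adj_in G (S - {w})"
      using cd(3) \<open>c \<noteq> w\<close> by (auto simp: adj_in_def)
    with cd(1) have "d \<in> component G (S - {w}) a"
      unfolding component_def by (blast intro: rtrancl_into_rtrancl)
    with cd(2) show False ..
  qed
  then show ?thesis using cd by (auto simp: adj_in_def)
qed

lemma induces_connectedI:
  assumes "v \<in> S" "\<And>z. z \<in> S \<Longrightarrow> (v, z) \<in> (adj_in G S)\<^sup>*"
  shows "induces_connected G S"
  unfolding induces_connected_def by (meson assms rtrancl_adj_in_sym rtrancl_trans)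

lemma induces_connectedD:
  "induces_connected G S \<Longrightarrow> a \<in> S \<Longrightarrow> b \<in> S \<Longrightarrow> (a, b) \<in> (adj_in G S)\<^sup>*"
  by (simp add: induces_connected_def)

lemma induces_connected_singleton: "induces_connected G {v}"
  by (simp add: induces_connected_def)

lemma induces_connected_component: "induces_connected G (component G S a)"
proof (rule induces_connectedI[OF component_self])
  fix z assume "z \<in> component G S a"
  then have "(a, z) \<in> (adj_in G S)\<^sup>*" by (simp add: component_def)
  then show "(a, z) \<in> (adj_in G (component G S a))\<^sup>*"
  proof (induction rule: rtrancl_induct)
    case (step y z)
    then have "(y, z) \<in> adj_in G (component G S a)"
      by (auto simp: adj_in_def component_def intro: rtrancl_into_rtrancl)
    with step.IH show ?case by (rule rtrancl_into_rtrancl)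
  qed simp
qed

lemma induces_connected_transfer:
  assumes "induces_connected G S" "\<And>a b. (a, b) \<in> adj_in G S \<Longrightarrow> (a, b) \<in> (adj_in G' S)\<^sup>*"
  shows "induces_connected G' S"
proof -
  have "(adj_in G S)\<^sup>* \<subseteq> (adj_in G' S)\<^sup>*"
    using assms(2) by (metis rtrancl_subset_rtrancl subrelI)
  then show ?thesis using assms(1) by (auto simp: induces_connected_def)
qed

lemma induces_connected_Union:
  assumes F: "connected_family F" and conn: "\<And>A. A \<in> F \<Longrightarrow> induces_connected G A"
  shows "induces_connected G (\<Union>F)"
proof (unfold induces_connected_def, intro ballI)
  have within: "(a, b) \<in> (adj_in G (\<Union>F))\<^sup>*" if "A \<in> F" "a \<in> A" "b \<in> A" for A a b
  proof -
    have "(a, b) \<in> (adj_in G A)\<^sup>*"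
      using conn[OF that(1)] that(2,3) by (simp add: induces_connected_def)
    then show ?thesis by (rule rtrancl_adj_in_mono) (use that(1) in auto)
  qed
  fix a b assume "a \<in> \<Union>F" "b \<in> \<Union>F"
  then obtain A1 A2 where A: "A1 \<in> F" "a \<in> A1" "A2 \<in> F" "b \<in> A2" by blast
  have "(A1, A2) \<in> {(X, Y). X \<in> F \<and> Y \<in> F \<and> X \<inter> Y \<noteq> {}}\<^sup>*"
    using F A unfolding connected_family_def by blast
  then have "\<forall>b\<in>A2. (a, b) \<in> (adj_in G (\<Union>F))\<^sup>*"
  proof (induction rule: rtrancl_induct)
    case base
    show ?case using within A by blast
  next
    case (step Y X)
    then obtain c where "c \<in> Y" "c \<in> X" "X \<in> F" by blast
    then show ?case using step.IH within by (meson rtrancl_trans)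
  qed
  then show "(a, b) \<in> (adj_in G (\<Union>F))\<^sup>*" using A by blast
qed

lemma induces_connected_neighbour:
  assumes "induces_connected G S" "a \<in> S" "b \<in> S" "a \<noteq> b"
  shows "\<exists>c. (a, c) \<in> adj_in G S"
proof -
  have "(a, b) \<in> (adj_in G S)\<^sup>*" using assms(1-3) by (rule induces_connectedD)
  with assms(4) show ?thesis by (blast elim: converse_rtranclE)
qed

lemma connected_familyI:
  assumes "finite F" "F0 \<in> F"
    and "\<And>X. X \<in> F \<Longrightarrow> (F0, X) \<in> {(X, Y). X \<in> F \<and> Y \<in> F \<and> X \<inter> Y \<noteq> {}}\<^sup>*"
  shows "connected_family F"
proof -
  let ?R = "{(X, Y). X \<in> F \<and> Y \<in> F \<and> X \<inter> Y \<noteq> {}}"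
  have "sym (?R\<^sup>*)" by (intro sym_rtrancl) (auto simp: sym_def)
  then have "(X, Y) \<in> ?R\<^sup>*" if "X \<in> F" "Y \<in> F" for X Y
    using assms(3)[OF that(1)] assms(3)[OF that(2)] by (blast dest: symD intro: rtrancl_trans)
  with assms(1,2) show ?thesis unfolding connected_family_def by blast
qed

lemma connected_family_edge_sets:
  assumes B: "induces_connected G B" "finite B" "a \<in> B" "b \<in> B" "a \<noteq> b"
    and f: "\<And>u v. {u, v} \<in> G \<Longrightarrow> u \<in> B \<Longrightarrow> v \<in> B \<Longrightarrow> u \<in> f u v \<and> v \<in> f u v \<and> f u v \<subseteq> B"
  defines "F \<equiv> {f u v | u v. {u, v} \<in> G \<and> u \<in> B \<and> v \<in> B}"
  shows "connected_family F" "\<Union>F = B"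
proof -
  let ?R = "{(X, Y). X \<in> F \<and> Y \<in> F \<and> X \<inter> Y \<noteq> {}}"
  have in_F: "f u v \<in> F" if "(u, v) \<in> adj_in G B" for u v
    using that unfolding F_def adj_in_def by blast
  have f_adj: "u \<in> f u v" "v \<in> f u v" if "(u, v) \<in> adj_in G B" for u v
    using that f unfolding adj_in_def by blast+
  have neighbour: "\<exists>c. (z, c) \<in> adj_in G B" if "z \<in> B" for z
  proof -
    obtain z' where "z' \<in> B" "z \<noteq> z'" using B(3-5) by blast
    with B(1) that show ?thesis by (rule induces_connected_neighbour)
  qed
  obtain c0 where c0: "(a, c0) \<in> adj_in G B" using neighbour B(3) by blast
  define F0 where "F0 = f a c0"
  have reach: "(F0, X) \<in> ?R\<^sup>*" if "(a, z) \<in> (adj_in G B)\<^sup>*" "X \<in> F" "z \<in> X" for z X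
    using that(1) that(2,3)
  proof (induction arbitrary: X rule: rtrancl_induct)
    case base
    then have "(F0, X) \<in> ?R" using in_F[OF c0] f_adj(1)[OF c0] unfolding F0_def by blast
    then show ?case by blast
  next
    case (step y z)
    then have "(F0, f y z) \<in> ?R\<^sup>*" using in_F f_adj(1) by blast
    moreover have "(f y z, X) \<in> ?R" using step in_F f_adj(2) by blast
    ultimately show ?case by (rule rtrancl_into_rtrancl)
  qed
  have "finite F"
  proof (rule finite_subset)
    show "F \<subseteq> Pow B" unfolding F_def using f by blast
  qed (use B(2) in simp)
  moreover have "F0 \<in> F" unfolding F0_def using in_F[OF c0] .
  moreover have "(F0, Z) \<in> ?R\<^sup>*" if Z: "Z \<in> F" for Z
  proof -
    obtain u v where "Z = f u v" "{u, v} \<in> G" "u \<in> B" "v \<in> B" using Z unfolding F_def by blast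
    then have "u \<in> Z" "(a, u) \<in> (adj_in G B)\<^sup>*"
      using f B(1,3) unfolding induces_connected_def by blast+
    then show ?thesis using reach Z by blast
  qed
  ultimately show "connected_family F" by (rule connected_familyI)
  show "\<Union>F = B"
  proof
    show "\<Union>F \<subseteq> B" unfolding F_def using f by blast
    show "B \<subseteq> \<Union>F" using neighbour in_F f_adj(1) by blast
  qed
qed

lemma induces_connected_mono: "induces_connected G S \<Longrightarrow> G \<subseteq> G' \<Longrightarrow> induces_connected G' S"
  unfolding induces_connected_def by (meson order_refl rtrancl_adj_in_mono)

section \<open>Trees\<close>

locale tree =
  fixes V :: "'a set" and T :: "'a set set"
  assumes tree: "tree_on V T"
begin

lemma finite_vertices: "finite V"
  using tree by (simp add: tree_on_def)

lemma edge_doubleton: "e \<in> T \<Longrightarrow> \<exists>a b. a \<noteq> b \<and> a \<in> V \<and> b \<in> V \<and> e = {a, b}"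
  using tree by (simp add: tree_on_def)

lemma edge_vertices: assumes "{a, b} \<in> T" shows "a \<in> V" "b \<in> V" "a \<noteq> b"
proof -
  obtain c d where "c \<noteq> d" "c \<in> V" "d \<in> V" "{a, b} = {c, d}"
    using edge_doubleton[OF assms] by blast
  then show "a \<in> V" "b \<in> V" "a \<noteq> b" by (auto simp: doubleton_eq_iff)
qed

lemma edge_is_bridge: "{a, b} \<in> T \<Longrightarrow> (a, b) \<notin> (adj_in (T - {{a, b}}) V)\<^sup>*"
  using tree by (simp add: tree_on_def)

lemma connected: "a \<in> V \<Longrightarrow> b \<in> V \<Longrightarrow> (a, b) \<in> (adj_in T V)\<^sup>*"
  using tree by (simp add: tree_on_def induces_connected_def)

lemma adj_in_Int_vertices: "adj_in T (S \<inter> V) = adj_in T S"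
  by (auto simp: adj_in_def dest: edge_vertices)

context
  fixes u v assumes uv: "{u, v} \<in> T"
begin

lemma sides_disjoint:
  "component (T - {{u, v}}) V u \<inter> component (T - {{u, v}}) V v = {}"
  using edge_is_bridge[OF uv] by (intro components_disjoint) (simp add: component_def)

lemma side_closed:
  assumes "{c, d} \<in> T" "{c, d} \<noteq> {u, v}" "c \<in> component (T - {{u, v}}) V w"
  shows "d \<in> component (T - {{u, v}}) V w"
proof -
  have "(c, d) \<in> adj_in (T - {{u, v}}) V"
    using assms edge_vertices[OF assms(1)] by (simp add: adj_in_def)
  then show ?thesis using assms(3) by (auto simp: component_def)
qed

lemma sides_cover:
  assumes "z \<in> V" shows "z \<in> component (T - {{u, v}}) V u \<union> component (T - {{u, v}}) V v"
proof -
  have "(u, z) \<in> (adj_in T V)\<^sup>*" using connected edge_vertices(1)[OF uv] assms .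
  then show ?thesis
  proof (induction rule: rtrancl_induct)
    case (step y z)
    then have "{y, z} \<in> T" by (simp add: adj_in_def)
    show ?case
    proof (cases "{y, z} = {u, v}")
      case True
      then have "z = u \<or> z = v" by (auto simp: doubleton_eq_iff)
      then show ?thesis
        using component_self[of u "T - {{u, v}}" V] component_self[of v "T - {{u, v}}" V] by blast
    next
      case False
      then show ?thesis using step.IH side_closed[OF \<open>{y, z} \<in> T\<close> False] by blast
    qed
  qed (simp add: component_self)
qed

lemma connected_across_edge:
  assumes "induces_connected T S" "a \<in> S" "b \<in> S"
    "a \<in> component (T - {{u, v}}) V u" "b \<in> component (T - {{u, v}}) V v"
  shows "u \<in> S" "v \<in> S"
proof -
  have "(a, b) \<in> (adj_in T S)\<^sup>*" using assms(1-3) unfolding induces_connected_def by blast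
  moreover have "b \<notin> component (T - {{u, v}}) V u" using assms(5) sides_disjoint by blast
  ultimately obtain c d where cd: "c \<in> component (T - {{u, v}}) V u"
    "d \<notin> component (T - {{u, v}}) V u" "(c, d) \<in> adj_in T S"
    using rtrancl_exit_step[of a b "adj_in T S"] assms(4) by blast
  then have "{c, d} = {u, v}" using side_closed by (auto simp: adj_in_def)
  then show "u \<in> S" "v \<in> S" using cd(3) by (auto simp: adj_in_def doubleton_eq_iff)
qed

text \<open>Otherwise every member lies on one side of the edge, and overlapping members lie on the
  same side.\<close>
lemma connected_family_contains_edge:
  assumes F: "connected_family F"
    and sub: "\<And>A. A \<in> F \<Longrightarrow> A \<subseteq> V \<and> induces_connected T A"
    and "u \<in> \<Union>F" "v \<in> \<Union>F"
  shows "\<exists>A\<in>F. u \<in> A \<and> v \<in> A"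
proof (rule ccontr)
  assume neg: "\<not> ?thesis"
  let ?U = "component (T - {{u, v}}) V u" and ?W = "component (T - {{u, v}}) V v"
  have disj: "?U \<inter> ?W = {}" by (rule sides_disjoint)
  have one_side: "A \<subseteq> ?U \<or> A \<subseteq> ?W" if A: "A \<in> F" for A
  proof (rule ccontr)
    assume "\<not> (A \<subseteq> ?U \<or> A \<subseteq> ?W)"
    then obtain a b where ab: "a \<in> A" "a \<notin> ?U" "b \<in> A" "b \<notin> ?W" by blast
    have "A \<subseteq> ?U \<union> ?W" using sides_cover sub[OF A] by blast
    with ab have "a \<in> ?W" "b \<in> ?U" by blast+
    with ab(1,3) sub[OF A] have "u \<in> A" "v \<in> A"
      using connected_across_edge[of A b a] by blast+
    with neg A show False by blast
  qed
  obtain A1 A2 where A: "A1 \<in> F" "u \<in> A1" "A2 \<in> F" "v \<in> A2" using assms(3,4) by blast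
  have "(A1, A2) \<in> {(X, Y). X \<in> F \<and> Y \<in> F \<and> X \<inter> Y \<noteq> {}}\<^sup>*"
    using F A unfolding connected_family_def by blast
  then have "A2 \<subseteq> ?U"
  proof (induction rule: rtrancl_induct)
    case base
    have "u \<in> ?U" by (rule component_self)
    with disj have "u \<notin> ?W" by blast
    with one_side[OF A(1)] A(2) show ?case by blast
  next
    case (step Y X)
    then have "X \<in> F" "Y \<inter> X \<noteq> {}" by auto
    with step.IH disj one_side[of X] show ?case by blast
  qed
  moreover have "v \<in> ?W" by (rule component_self)
  ultimately show False using A(4) disj by blast
qed

end

text \<open>Otherwise the walk leaves the components of \<open>p\<close> and of \<open>q\<close> in \<open>S - {w}\<close> through two
  distinct tree edges at \<open>w\<close>, which close a cycle through \<open>S'\<close>.\<close>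
lemma rtrancl_adj_in_avoid:
  assumes S': "induces_connected T S'" "p \<in> S'" "q \<in> S'" "w \<notin> S'"
    and pq: "(p, q) \<in> (adj_in T S)\<^sup>*"
  shows "(p, q) \<in> (adj_in T (S - {w}))\<^sup>*"
proof (rule ccontr)
  assume avoid: "(p, q) \<notin> (adj_in T (S - {w}))\<^sup>*"
  have "p \<noteq> w" "q \<noteq> w" using S'(2-4) by auto
  have "q \<notin> component T (S - {w}) p" "p \<notin> component T (S - {w}) q"
    using avoid rtrancl_adj_in_sym[of q p] by (auto simp: component_def)
  then obtain c c' where c: "c \<in> component T (S - {w}) p" "{c, w} \<in> T"
    and c': "c' \<in> component T (S - {w}) q" "{c', w} \<in> T"
    using component_Diff_exit[OF pq _ \<open>p \<noteq> w\<close>]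
      component_Diff_exit[OF rtrancl_adj_in_sym[OF pq] _ \<open>q \<noteq> w\<close>] by blast
  have "c \<noteq> c'"
  proof
    assume "c = c'"
    then have "(c, q) \<in> (adj_in T (S - {w}))\<^sup>*"
      using c'(1) rtrancl_adj_in_sym[of q c'] by (simp add: component_def)
    with c(1) have "(p, q) \<in> (adj_in T (S - {w}))\<^sup>*"
      unfolding component_def by (blast intro: rtrancl_trans)
    with avoid show False ..
  qed
  let ?R = "adj_in (T - {{c, w}}) V"
  have sub: "adj_in T (S - {w}) \<subseteq> ?R" "adj_in T S' \<subseteq> ?R"
    using S'(4) by (auto simp: adj_in_def doubleton_eq_iff dest: edge_vertices)
  have "(c, p) \<in> ?R\<^sup>*"
    using rtrancl_mono[OF sub(1)] c(1) rtrancl_adj_in_sym[of p c] by (auto simp: component_def)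
  also have "(p, q) \<in> ?R\<^sup>*"
    using rtrancl_mono[OF sub(2)] S'(1-3) by (auto simp: induces_connected_def)
  also have "(q, c') \<in> ?R\<^sup>*"
    using rtrancl_mono[OF sub(1)] c'(1) by (auto simp: component_def)
  also have "(c', w) \<in> ?R"
    using c'(2) \<open>c \<noteq> c'\<close> edge_vertices[OF c'(2)] by (auto simp: adj_in_def doubleton_eq_iff)
  finally have "(c, w) \<in> ?R\<^sup>*" .
  then show False using edge_is_bridge[OF c(2)] by simp
qed

lemma rtrancl_adj_in_Int:
  assumes "induces_connected T S'" "p \<in> S'" "q \<in> S'" "(p, q) \<in> (adj_in T S)\<^sup>*"
  shows "(p, q) \<in> (adj_in T (S \<inter> S'))\<^sup>*"
proof -
  have "(p, q) \<in> (adj_in T (S \<inter> V - D))\<^sup>*" if "finite D" "D \<inter> S' = {}" for D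
    using that
  proof (induction D rule: finite_induct)
    case empty
    then show ?case using assms(4) adj_in_Int_vertices by simp
  next
    case (insert w D)
    then have "w \<notin> S'" "(p, q) \<in> (adj_in T (S \<inter> V - D))\<^sup>*" by auto
    then have "(p, q) \<in> (adj_in T (S \<inter> V - D - {w}))\<^sup>*"
      using rtrancl_adj_in_avoid[OF assms(1-3)] by blast
    then show ?case by (metis Diff_insert)
  qed
  from this[of "S \<inter> V - S'"] have "(p, q) \<in> (adj_in T (S \<inter> V \<inter> S'))\<^sup>*"
    using finite_vertices by (simp add: Diff_Diff_Int Int_ac)
  then show ?thesis by (metis adj_in_Int_vertices Int_assoc Int_commute)
qed

lemma induces_connected_Int:
  "induces_connected T A \<Longrightarrow> induces_connected T B \<Longrightarrow> induces_connected T (A \<inter> B)"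
  unfolding induces_connected_def using rtrancl_adj_in_Int[of B] by (auto simp: induces_connected_def)

lemma induces_connected_vertices_Inter:
  "finite G \<Longrightarrow> (\<And>A. A \<in> G \<Longrightarrow> induces_connected T A) \<Longrightarrow> induces_connected T (V \<inter> \<Inter>G)"
proof (induction G rule: finite_induct)
  case empty
  then show ?case using connected by (simp add: induces_connected_def)
next
  case (insert A G)
  then show ?case using induces_connected_Int[of "V \<inter> \<Inter>G" A] by (simp add: Int_ac)
qed

context
  fixes u v x
  assumes uv: "{u, v} \<in> T" and x: "x \<in> component (T - {{u, v}}) V v"
begin

lemma exchange_separated: "(u, x) \<notin> (adj_in (T - {{u, v}}) V)\<^sup>*"
  using sides_disjoint[OF uv] x unfolding component_def by blast

lemma exchange_vertices: "u \<in> V" "x \<in> V" "u \<noteq> x"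
  using edge_vertices[OF uv] component_subset[of v V] x exchange_separated by auto

lemma walk_within_side:
  assumes S: "induces_connected T S" "x \<in> S" "v \<in> S"
  shows "(v, x) \<in> (adj_in (T - {{u, v}}) S)\<^sup>*"
proof -
  let ?B = "component (T - {{u, v}}) V v"
  have "induces_connected T ?B"
    by (rule induces_connected_mono[OF induces_connected_component]) auto
  moreover have "(v, x) \<in> (adj_in T S)\<^sup>*" using S by (simp add: induces_connected_def)
  ultimately have "(v, x) \<in> (adj_in T (S \<inter> ?B))\<^sup>*"
    by (rule rtrancl_adj_in_Int[OF _ component_self x])
  moreover have "u \<notin> ?B" using sides_disjoint[OF uv] component_self[of u] by blast
  then have "adj_in T (S \<inter> ?B) \<subseteq> adj_in (T - {{u, v}}) S"
    by (auto simp: adj_in_def doubleton_eq_iff)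
  ultimately show ?thesis using rtrancl_mono by blast
qed

lemma exchange_connected: "induces_connected (insert {u, x} (T - {{u, v}})) V"
proof (rule induces_connectedI[OF exchange_vertices(1)])
  let ?T0 = "T - {{u, v}}" and ?T' = "insert {u, x} (T - {{u, v}})"
  have T0_T': "(adj_in ?T0 V)\<^sup>* \<subseteq> (adj_in ?T' V)\<^sup>*" by (intro rtrancl_mono adj_in_mono) auto
  fix z assume "z \<in> V"
  then consider "(u, z) \<in> (adj_in ?T0 V)\<^sup>*" | "(v, z) \<in> (adj_in ?T0 V)\<^sup>*"
    using sides_cover[OF uv] unfolding component_def by blast
  then show "(u, z) \<in> (adj_in ?T' V)\<^sup>*"
  proof cases
    case 1
    then show ?thesis using T0_T' by blast
  next
    case 2
    moreover have "(x, v) \<in> (adj_in ?T0 V)\<^sup>*"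
      using rtrancl_adj_in_sym[of v x] x unfolding component_def by blast
    ultimately have "(x, z) \<in> (adj_in ?T0 V)\<^sup>*" by (rule rtrancl_trans[rotated])
    then have "(x, z) \<in> (adj_in ?T' V)\<^sup>*" using T0_T' by blast
    moreover have "(u, x) \<in> adj_in ?T' V" using exchange_vertices by (simp add: adj_in_def)
    ultimately show ?thesis by (rule converse_rtrancl_into_rtrancl[rotated])
  qed
qed

text \<open>A walk closing a cycle through \<open>ab\<close> must use the new edge \<open>ux\<close>; together with
  \<open>ab\<close> it would then join \<open>u\<close> and \<open>x\<close> in \<open>T - {uv}\<close>.\<close>
lemma exchange_old_edge_is_bridge:
  assumes ab: "{a, b} \<in> T - {{u, v}}"
  shows "(a, b) \<notin> (adj_in (insert {u, x} (T - {{u, v}} - {{a, b}})) V)\<^sup>*"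
proof
  let ?T0 = "T - {{u, v}}" and ?R = "adj_in (T - {{u, v}} - {{a, b}}) V"
  assume "(a, b) \<in> (adj_in (insert {u, x} (?T0 - {{a, b}})) V)\<^sup>*"
  then have "(a, b) \<in> (?R \<union> {(u, x), (x, u)})\<^sup>*"
    using adj_in_insert[OF exchange_vertices(1,2)] by simp
  moreover have "(a, b) \<notin> ?R\<^sup>*"
  proof -
    have "?R\<^sup>* \<subseteq> (adj_in (T - {{a, b}}) V)\<^sup>*" by (intro rtrancl_mono adj_in_mono) auto
    then show ?thesis using edge_is_bridge[of a b] ab by blast
  qed
  ultimately have "(a, u) \<in> ?R\<^sup>* \<and> (x, b) \<in> ?R\<^sup>* \<or> (a, x) \<in> ?R\<^sup>* \<and> (u, b) \<in> ?R\<^sup>*"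
    using rtrancl_Un_edge_cases[of a b ?R u x] by blast
  moreover have "?R\<^sup>* \<subseteq> (adj_in ?T0 V)\<^sup>*" by (intro rtrancl_mono adj_in_mono) auto
  moreover have ab_T0: "(a, b) \<in> adj_in ?T0 V" "(b, a) \<in> adj_in ?T0 V"
    using ab edge_vertices[of a b] by (auto simp: adj_in_def insert_commute)
  ultimately have "(u, x) \<in> (adj_in ?T0 V)\<^sup>*"
  proof (elim disjE conjE)
    assume "(a, u) \<in> ?R\<^sup>*" "(x, b) \<in> ?R\<^sup>*" "?R\<^sup>* \<subseteq> (adj_in ?T0 V)\<^sup>*"
    then have "(u, a) \<in> (adj_in ?T0 V)\<^sup>*" "(b, x) \<in> (adj_in ?T0 V)\<^sup>*"
      using rtrancl_adj_in_sym[of a u] rtrancl_adj_in_sym[of x b] by blast+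
    then have "(u, b) \<in> (adj_in ?T0 V)\<^sup>*" "(b, x) \<in> (adj_in ?T0 V)\<^sup>*"
      using ab_T0(1) by (auto intro: rtrancl_into_rtrancl[of u a])
    then show ?thesis by (rule rtrancl_trans)
  next
    assume "(a, x) \<in> ?R\<^sup>*" "(u, b) \<in> ?R\<^sup>*" "?R\<^sup>* \<subseteq> (adj_in ?T0 V)\<^sup>*"
    then have "(u, b) \<in> (adj_in ?T0 V)\<^sup>*" "(a, x) \<in> (adj_in ?T0 V)\<^sup>*" by blast+
    then have "(u, a) \<in> (adj_in ?T0 V)\<^sup>*" "(a, x) \<in> (adj_in ?T0 V)\<^sup>*"
      using ab_T0(2) by (auto intro: rtrancl_into_rtrancl[of u b])
    then show ?thesis by (rule rtrancl_trans)
  qed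
  with exchange_separated show False ..
qed

lemma tree_exchange: "tree_on V (insert {u, x} (T - {{u, v}}))"
proof -
  define T' where "T' = insert {u, x} (T - {{u, v}})"
  have "{u, x} \<notin> T - {{u, v}}"
  proof
    assume "{u, x} \<in> T - {{u, v}}"
    then have "(u, x) \<in> adj_in (T - {{u, v}}) V" using exchange_vertices by (simp add: adj_in_def)
    with exchange_separated show False by blast
  qed
  have "(a, b) \<notin> (adj_in (T' - {{a, b}}) V)\<^sup>*" if ab: "{a, b} \<in> T'" for a b
  proof (cases "{a, b} = {u, x}")
    case True
    then have eq: "T' - {{a, b}} = T - {{u, v}}" using \<open>{u, x} \<notin> T - {{u, v}}\<close> by (simp add: T'_def)
    show ?thesis
    proof
      assume "(a, b) \<in> (adj_in (T' - {{a, b}}) V)\<^sup>*"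
      then have "(a, b) \<in> (adj_in (T - {{u, v}}) V)\<^sup>*" by (simp only: eq)
      moreover have "a = u \<and> b = x \<or> a = x \<and> b = u" using True by (simp add: doubleton_eq_iff)
      ultimately have "(u, x) \<in> (adj_in (T - {{u, v}}) V)\<^sup>*" using rtrancl_adj_in_sym[of x u] by blast
      with exchange_separated show False ..
    qed
  next
    case False
    then have "T' - {{a, b}} = insert {u, x} (T - {{u, v}} - {{a, b}})" "{a, b} \<in> T - {{u, v}}"
      using ab by (auto simp: T'_def)
    then show ?thesis using exchange_old_edge_is_bridge by simp
  qed
  moreover have "\<exists>a b. a \<noteq> b \<and> a \<in> V \<and> b \<in> V \<and> e = {a, b}" if "e \<in> T'" for e
  proof (cases "e = {u, x}")
    case True
    with exchange_vertices show ?thesis by blast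
  next
    case False
    with that have "e \<in> T" by (simp add: T'_def)
    then show ?thesis by (rule edge_doubleton)
  qed
  moreover have "finite V" "V \<noteq> {}" using tree by (simp_all add: tree_on_def)
  moreover have "induces_connected T' V" unfolding T'_def by (rule exchange_connected)
  ultimately show ?thesis unfolding tree_on_def T'_def[symmetric] by blast
qed

lemma induces_connected_exchange:
  assumes S: "induces_connected T S" and x_S: "u \<in> S \<Longrightarrow> v \<in> S \<Longrightarrow> x \<in> S"
  shows "induces_connected (insert {u, x} (T - {{u, v}})) S"
proof (rule induces_connected_transfer[OF S])
  let ?T' = "insert {u, x} (T - {{u, v}})"
  have T_T': "(adj_in (T - {{u, v}}) S)\<^sup>* \<subseteq> (adj_in ?T' S)\<^sup>*"
    by (intro rtrancl_mono adj_in_mono) auto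
  fix c d assume cd: "(c, d) \<in> adj_in T S"
  show "(c, d) \<in> (adj_in ?T' S)\<^sup>*"
  proof (cases "{c, d} = {u, v}")
    case False
    with cd have "(c, d) \<in> adj_in ?T' S" by (auto simp: adj_in_def)
    then show ?thesis by blast
  next
    case True
    with cd have "u \<in> S" "v \<in> S" by (auto simp: adj_in_def doubleton_eq_iff)
    with x_S have "x \<in> S" by blast
    have "(v, x) \<in> (adj_in ?T' S)\<^sup>*"
      using walk_within_side[OF S \<open>x \<in> S\<close> \<open>v \<in> S\<close>] T_T' by blast
    moreover have "(x, u) \<in> adj_in ?T' S" using \<open>x \<in> S\<close> \<open>u \<in> S\<close> by (simp add: adj_in_def insert_commute)
    ultimately have "(v, u) \<in> (adj_in ?T' S)\<^sup>*" by (rule rtrancl_into_rtrancl)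
    moreover have "(u, v) \<in> (adj_in ?T' S)\<^sup>*" using rtrancl_adj_in_sym[OF calculation] .
    ultimately show ?thesis using True by (auto simp: doubleton_eq_iff)
  qed
qed

end

end

section \<open>Host trees of hypergraphs\<close>

definition neighbourhood :: "'a set set \<Rightarrow> 'a \<Rightarrow> 'a set" where
  "neighbourhood E y = \<Union>{e\<in>E. y \<in> e}"

lemma NH_eq: "NH V E = neighbourhood E ` V"
  by (auto simp: NH_def neighbourhood_def)

lemma host_tree_NH: assumes "host_tree V E T" shows "host_tree V (NH V E) T"
proof -
  have "induces_connected T (neighbourhood E w)" for w
  proof (unfold induces_connected_def, intro ballI)
    have walk: "(a, w) \<in> (adj_in T (neighbourhood E w))\<^sup>*" if "a \<in> e" "w \<in> e" "e \<in> E" for a e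
    proof -
      have "(a, w) \<in> (adj_in T e)\<^sup>*"
        using assms that unfolding host_tree_def induces_connected_def by blast
      then show ?thesis by (rule rtrancl_adj_in_mono) (use that in \<open>auto simp: neighbourhood_def\<close>)
    qed
    fix a b assume "a \<in> neighbourhood E w" "b \<in> neighbourhood E w"
    then obtain ea eb where "a \<in> ea" "w \<in> ea" "ea \<in> E" "b \<in> eb" "w \<in> eb" "eb \<in> E"
      by (auto simp: neighbourhood_def)
    with walk have "(a, w) \<in> (adj_in T (neighbourhood E w))\<^sup>*"
      "(w, b) \<in> (adj_in T (neighbourhood E w))\<^sup>*"
      using rtrancl_adj_in_sym[of b w] by blast+
    then show "(a, b) \<in> (adj_in T (neighbourhood E w))\<^sup>*" by (rule rtrancl_trans)
  qed
  then show ?thesis using assms by (simp add: host_tree_def NH_eq)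
qed

lemma comp_gen_Inter:
  "finite G \<Longrightarrow> G \<noteq> {} \<Longrightarrow> G \<subseteq> comp_gen E \<Longrightarrow> \<Inter>G \<noteq> {} \<Longrightarrow> \<Inter>G \<in> comp_gen E"
proof (induction G rule: finite_ne_induct)
  case (insert A G)
  then have "\<Inter>G \<in> comp_gen E" by auto
  with insert.prems show ?case using comp_gen.inter[of A E "\<Inter>G"] by auto
qed simp

lemma subset_IH: "V' \<subseteq> V \<Longrightarrow> V' \<subseteq> IH V E V'"
  by (auto simp: IH_def)

lemma IH_subset_edge: "e \<in> E \<Longrightarrow> V' \<subseteq> e \<Longrightarrow> IH V E V' \<subseteq> e"
  by (auto simp: IH_def)

lemma IH_subset_vertices: "hypergraph V E \<Longrightarrow> IH V E V' \<subseteq> V"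
  by (auto simp: IH_def hypergraph_def)

lemma IH_in_Comp:
  assumes "hypergraph V E" "V' \<subseteq> V" "V' \<noteq> {}" shows "IH V E V' \<in> Comp V E"
proof (cases "\<exists>e\<in>E. V' \<subseteq> e")
  case True
  let ?G = "{e\<in>E. V' \<subseteq> e}"
  have "finite ?G" using assms(1) by (simp add: hypergraph_def)
  moreover have "?G \<noteq> {}" "?G \<subseteq> comp_gen E" "\<Inter>?G \<noteq> {}"
    using True assms(3) by (auto intro: comp_gen.edge)
  ultimately have "\<Inter>?G \<in> comp_gen E" by (rule comp_gen_Inter)
  moreover have "IH V E V' = \<Inter>?G" using True by (simp add: IH_def)
  ultimately show ?thesis using IH_subset_vertices[OF assms(1)] unfolding Comp_def by auto
next
  case False
  then show ?thesis by (simp add: IH_def Comp_def)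
qed

locale hosted_hypergraph =
  fixes V :: "'a set" and E :: "'a set set" and T :: "'a set set"
  assumes hypergraph: "hypergraph V E" and host_tree: "host_tree V E T"
begin

sublocale tree V T
  using host_tree by unfold_locales (simp add: host_tree_def)

lemma edge_subset: "e \<in> E \<Longrightarrow> e \<subseteq> V"
  using hypergraph by (simp add: hypergraph_def)

lemma edge_connected: "e \<in> E \<Longrightarrow> induces_connected T e"
  using host_tree by (simp add: host_tree_def)

lemma edge_through_tree_edge:
  assumes uv: "{u, v} \<in> T" and e: "e1 \<in> E" "e2 \<in> E" "w \<in> e1" "w \<in> e2" "u \<in> e1" "v \<in> e2"
  shows "\<exists>e\<in>E. u \<in> e \<and> v \<in> e \<and> w \<in> e"
proof -
  have "w \<in> component (T - {{u, v}}) V u \<union> component (T - {{u, v}}) V v"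
    using sides_cover[OF uv] edge_subset e by blast
  then show ?thesis
  proof
    assume "w \<in> component (T - {{u, v}}) V u"
    then have "u \<in> e2" "v \<in> e2"
      using connected_across_edge[OF uv edge_connected[OF e(2)] e(4) e(6)]
        component_self[of v "T - {{u, v}}" V] by blast+
    with e show ?thesis by blast
  next
    assume "w \<in> component (T - {{u, v}}) V v"
    then have "u \<in> e1" "v \<in> e1"
      using connected_across_edge[OF uv edge_connected[OF e(1)] e(5) e(3)]
        component_self[of u "T - {{u, v}}" V] by blast+
    with e show ?thesis by blast
  qed
qed

lemma comp_gen_subtree: "A \<in> comp_gen E \<Longrightarrow> A \<noteq> {} \<and> A \<subseteq> V \<and> induces_connected T A"
proof (induction rule: comp_gen.induct)
  case (edge e)
  then show ?case using hypergraph edge_connected by (simp add: hypergraph_def)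
next
  case (inter A B)
  then show ?case using induces_connected_Int by blast
next
  case (union F)
  then have "F \<noteq> {}" by (simp add: connected_family_def)
  with union show ?case using induces_connected_Union[of F T] by blast
qed

lemma Comp_subtree: "A \<in> Comp V E \<Longrightarrow> A \<noteq> {} \<and> A \<subseteq> V \<and> induces_connected T A"
proof -
  have "V \<noteq> {}" "induces_connected T V" using tree by (simp_all add: tree_on_def)
  then show "A \<in> Comp V E \<Longrightarrow> ?thesis"
    using comp_gen_subtree[of A] induces_connected_singleton[of T] unfolding Comp_def by blast
qed

lemma Comp_Int:
  assumes "A \<in> Comp V E" "B \<in> Comp V E" "A \<inter> B \<noteq> {}" shows "A \<inter> B \<in> Comp V E"
proof -
  have "A \<subseteq> V" "B \<subseteq> V" using Comp_subtree assms(1,2) by auto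
  consider "A = V \<or> B = V" | "\<exists>w. A = {w} \<or> B = {w}" | "A \<in> comp_gen E" "A \<subset> V" "B \<in> comp_gen E"
    using assms(1,2) unfolding Comp_def by blast
  then show ?thesis
  proof cases
    case 1
    with assms \<open>A \<subseteq> V\<close> \<open>B \<subseteq> V\<close> show ?thesis by (auto simp: Int_absorb1 Int_absorb2)
  next
    case 2
    then obtain w where "A \<inter> B = {w}" using assms(3) by blast
    moreover have "w \<in> V" using calculation \<open>A \<subseteq> V\<close> by blast
    ultimately show ?thesis by (auto simp: Comp_def)
  next
    case 3
    then have "A \<inter> B \<in> comp_gen E" "A \<inter> B \<subset> V" using comp_gen.inter assms(3) by blast+
    then show ?thesis unfolding Comp_def by blast
  qed
qed

text \<open>For connected unions this is where \<open>uv\<close> being a tree edge matters.\<close>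
lemma IH_subset_comp_gen:
  assumes uv: "{u, v} \<in> T"
  shows "A \<in> comp_gen E \<Longrightarrow> u \<in> A \<Longrightarrow> v \<in> A \<Longrightarrow> IH V E {u, v} \<subseteq> A"
proof (induction rule: comp_gen.induct)
  case (edge e)
  then show ?case by (simp add: IH_subset_edge)
next
  case (inter A B)
  then show ?case by blast
next
  case (union F)
  have "A \<subseteq> V \<and> induces_connected T A" if "A \<in> F" for A
    using union that comp_gen_subtree by blast
  then obtain A where "A \<in> F" "u \<in> A" "v \<in> A"
    using connected_family_contains_edge[OF uv \<open>connected_family F\<close>] union.prems by blast
  with union.IH show ?case by blast
qed

end

section \<open>The two characterisations\<close>

definition tree_edge_condition :: "'a set \<Rightarrow> 'a set set \<Rightarrow> 'a set set \<Rightarrow> bool" where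
  "tree_edge_condition V E T \<longleftrightarrow> (\<forall>u v. {u, v} \<in> T \<longrightarrow>
     (\<forall>x\<in>V. x \<notin> IH V E {u, v} \<longrightarrow>
        (\<exists>y\<in>V. (\<exists>e\<in>E. {u, v, y} \<subseteq> e) \<and> \<not> (\<exists>e\<in>E. {x, y} \<subseteq> e))))"

definition basic_set_condition :: "'a set \<Rightarrow> 'a set set \<Rightarrow> bool" where
  "basic_set_condition V E \<longleftrightarrow> (\<forall>B. basic_set V E B \<longrightarrow>
     (\<forall>x\<in>V. x \<notin> B \<longrightarrow>
        (\<exists>y\<in>V. (\<exists>e\<in>E. insert y B \<subseteq> e) \<and> \<not> (\<exists>e\<in>E. {x, y} \<subseteq> e))))"

lemma tree_edge_conditionD:
  assumes "tree_edge_condition V E T" "{u, v} \<in> T" "x \<in> V" "x \<notin> IH V E {u, v}"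
  shows "\<exists>y\<in>V. (\<exists>e\<in>E. {u, v, y} \<subseteq> e) \<and> \<not> (\<exists>e\<in>E. {x, y} \<subseteq> e)"
proof -
  from assms(1) have "{u, v} \<in> T \<longrightarrow> (\<forall>x\<in>V. x \<notin> IH V E {u, v} \<longrightarrow>
      (\<exists>y\<in>V. (\<exists>e\<in>E. {u, v, y} \<subseteq> e) \<and> \<not> (\<exists>e\<in>E. {x, y} \<subseteq> e)))"
    unfolding tree_edge_condition_def by (elim allE)
  with assms(2-4) show ?thesis by blast
qed

lemma basic_set_conditionD:
  assumes "basic_set_condition V E" "basic_set V E B" "x \<in> V" "x \<notin> B"
  shows "\<exists>y\<in>V. (\<exists>e\<in>E. insert y B \<subseteq> e) \<and> \<not> (\<exists>e\<in>E. {x, y} \<subseteq> e)"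
  using assms unfolding basic_set_condition_def by blast

lemma Inter_neighbourhoods_subset_IH:
  assumes "tree_edge_condition V E T" "{w, z} \<in> T"
  shows "V \<inter> (\<Inter>y\<in>{y\<in>V. \<exists>e\<in>E. {w, z, y} \<subseteq> e}. neighbourhood E y) \<subseteq> IH V E {w, z}"
proof
  fix x assume "x \<in> V \<inter> (\<Inter>y\<in>{y\<in>V. \<exists>e\<in>E. {w, z, y} \<subseteq> e}. neighbourhood E y)"
  then have x: "x \<in> V" "\<And>y. y \<in> V \<Longrightarrow> \<exists>e\<in>E. {w, z, y} \<subseteq> e \<Longrightarrow> x \<in> neighbourhood E y"
    by auto
  show "x \<in> IH V E {w, z}"
  proof (rule ccontr)
    assume "x \<notin> IH V E {w, z}"
    then obtain y where y: "y \<in> V" "\<exists>e\<in>E. {w, z, y} \<subseteq> e" "\<not> (\<exists>e\<in>E. {x, y} \<subseteq> e)"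
      using tree_edge_conditionD[OF assms x(1)] by blast
    from x(2)[OF y(1,2)] y(3) show False by (auto simp: neighbourhood_def)
  qed
qed

context hosted_hypergraph
begin

lemma tree_edge_condition_imp_equivalent:
  assumes cond: "tree_edge_condition V E T" shows "equivalent V E (NH V E)"
  unfolding equivalent_def
proof (intro allI iffI)
  fix T' assume "host_tree V E T'" then show "host_tree V (NH V E) T'" by (rule host_tree_NH)
next
  fix T' assume T': "host_tree V (NH V E) T'"
  interpret T': tree V T' using T' by unfold_locales (simp add: host_tree_def)
  have step: "(w, z) \<in> (adj_in T' e)\<^sup>*" if e: "e \<in> E" and wz: "(w, z) \<in> adj_in T e" for e w z
  proof -
    from wz have wz: "{w, z} \<in> T" "w \<in> e" "z \<in> e" by (auto simp: adj_in_def)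
    let ?Y = "{y\<in>V. \<exists>e\<in>E. {w, z, y} \<subseteq> e}"
    let ?N = "V \<inter> (\<Inter>y\<in>?Y. neighbourhood E y)"
    have "finite ?Y" by (rule finite_subset[OF _ finite_vertices]) blast
    then have "finite (neighbourhood E ` ?Y)" by (rule finite_imageI)
    moreover have "neighbourhood E ` ?Y \<subseteq> NH V E" by (auto simp: NH_eq)
    then have "induces_connected T' A" if "A \<in> neighbourhood E ` ?Y" for A
      using T' that unfolding host_tree_def by blast
    ultimately have "induces_connected T' ?N" by (rule T'.induces_connected_vertices_Inter)
    moreover have "w \<in> neighbourhood E y \<and> z \<in> neighbourhood E y" if "y \<in> ?Y" for y
      using that by (auto simp: neighbourhood_def)
    then have "w \<in> ?N" "z \<in> ?N" using edge_vertices[OF wz(1)] by blast+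
    ultimately have walk: "(w, z) \<in> (adj_in T' ?N)\<^sup>*" by (rule induces_connectedD)
    have "IH V E {w, z} \<subseteq> e" using IH_subset_edge[OF e] wz by simp
    with Inter_neighbourhoods_subset_IH[OF cond wz(1)] have "?N \<subseteq> e" by (rule order_trans)
    then show ?thesis by (rule rtrancl_adj_in_mono[OF walk order_refl])
  qed
  have "induces_connected T' e" if "e \<in> E" for e
    using induces_connected_transfer[OF edge_connected[OF that] step[OF that]] .
  then show "host_tree V E T'" using T' by (simp add: host_tree_def)
qed

lemma not_equivalent_if_no_witness:
  assumes uv: "{u, v} \<in> T" and x: "x \<in> component (T - {{u, v}}) V v" "x \<notin> IH V E {u, v}"
    and no_witness: "\<And>y. y \<in> V \<Longrightarrow> \<exists>e\<in>E. {u, v, y} \<subseteq> e \<Longrightarrow> \<exists>e\<in>E. {x, y} \<subseteq> e"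
  shows "\<not> equivalent V E (NH V E)"
proof -
  let ?T' = "insert {u, x} (T - {{u, v}})"
  interpret T': tree V ?T' using tree_exchange[OF uv x(1)] by unfold_locales
  have "x \<in> V" using component_subset[OF edge_vertices(2)[OF uv]] x(1) by blast
  then obtain e0 where e0: "e0 \<in> E" "u \<in> e0" "v \<in> e0" "x \<notin> e0"
    using x(2) by (auto simp: IH_def split: if_splits)
  have "\<not> host_tree V E ?T'"
  proof
    assume "host_tree V E ?T'"
    then have "(u, v) \<in> (adj_in ?T' e0)\<^sup>*" using e0 unfolding host_tree_def induces_connected_def by blast
    moreover have "adj_in ?T' e0 \<subseteq> adj_in (T - {{u, v}}) V"
      using e0(4) edge_subset[OF e0(1)] by (auto simp: adj_in_def doubleton_eq_iff)
    ultimately have "(u, v) \<in> (adj_in (T - {{u, v}}) V)\<^sup>*" using rtrancl_mono by blast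
    with edge_is_bridge[OF uv] show False ..
  qed
  moreover have "induces_connected ?T' (neighbourhood E w)" if w: "w \<in> V" for w
  proof (rule induces_connected_exchange[OF uv x(1)])
    show "induces_connected T (neighbourhood E w)"
      using host_tree_NH[OF host_tree] w by (simp add: host_tree_def NH_eq)
    assume "u \<in> neighbourhood E w" "v \<in> neighbourhood E w"
    then obtain e1 e2 where "e1 \<in> E" "e2 \<in> E" "w \<in> e1" "w \<in> e2" "u \<in> e1" "v \<in> e2"
      by (auto simp: neighbourhood_def)
    then have "\<exists>e\<in>E. {u, v, w} \<subseteq> e" using edge_through_tree_edge[OF uv] by blast
    then show "x \<in> neighbourhood E w" using no_witness[OF w] by (auto simp: neighbourhood_def)
  qed
  then have "host_tree V (NH V E) ?T'" using T'.tree by (simp add: host_tree_def NH_eq)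
  ultimately show ?thesis unfolding equivalent_def by blast
qed

lemma equivalent_imp_tree_edge_condition:
  assumes equiv: "equivalent V E (NH V E)" shows "tree_edge_condition V E T"
  unfolding tree_edge_condition_def
proof (intro allI impI ballI)
  fix u v x assume uv: "{u, v} \<in> T" and x: "x \<in> V" "x \<notin> IH V E {u, v}"
  show "\<exists>y\<in>V. (\<exists>e\<in>E. {u, v, y} \<subseteq> e) \<and> \<not> (\<exists>e\<in>E. {x, y} \<subseteq> e)"
  proof (rule ccontr)
    assume "\<not> ?thesis"
    then have no_witness: "\<And>y. y \<in> V \<Longrightarrow> \<exists>e\<in>E. {u, v, y} \<subseteq> e \<Longrightarrow> \<exists>e\<in>E. {x, y} \<subseteq> e"
      by blast
    have swap: "{v, u} = {u, v}" "\<And>y. {v, u, y} = {u, v, y}" by blast+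
    consider "x \<in> component (T - {{u, v}}) V v" | "x \<in> component (T - {{v, u}}) V u"
      using sides_cover[OF uv x(1)] swap(1) by auto
    then show False
    proof cases
      case 1
      from not_equivalent_if_no_witness[OF uv 1 x(2) no_witness] equiv show False by blast
    next
      case 2
      have "{v, u} \<in> T" "x \<notin> IH V E {v, u}" using uv x(2) by (simp_all add: swap)
      moreover have "\<And>y. y \<in> V \<Longrightarrow> \<exists>e\<in>E. {v, u, y} \<subseteq> e \<Longrightarrow> \<exists>e\<in>E. {x, y} \<subseteq> e"
        using no_witness by (simp add: swap)
      ultimately show False using not_equivalent_if_no_witness[of v u x] 2 equiv by blast
    qed
  qed
qed

text \<open>Any decomposition of a smallest such set has a smaller part containing \<open>u\<close> and \<open>v\<close>.\<close>
lemma basic_set_between: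
  assumes uv: "{u, v} \<in> T"
  shows "\<exists>B. basic_set V E B \<and> u \<in> B \<and> v \<in> B \<and> B \<subseteq> IH V E {u, v}"
proof -
  have uvV: "{u, v} \<subseteq> V" "u \<noteq> v" using edge_vertices[OF uv] by auto
  let ?M = "{A \<in> Comp V E. u \<in> A \<and> v \<in> A}"
  have IH_M: "IH V E {u, v} \<in> ?M" using IH_in_Comp[OF hypergraph uvV(1)] subset_IH[OF uvV(1)] by auto
  then obtain B where B: "B \<in> ?M" and B_min: "\<And>A. A \<in> ?M \<Longrightarrow> card B \<le> card A"
    using ex_has_least_nat[of "\<lambda>A. A \<in> ?M" _ card] by blast
  have "B \<subseteq> V" using B Comp_subtree by blast
  then have "finite B" using finite_vertices by (rule finite_subset)
  have "B \<inter> IH V E {u, v} \<in> Comp V E"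
    using B IH_M by (intro Comp_Int) auto
  then have "B \<inter> IH V E {u, v} \<in> ?M" using B IH_M by blast
  then have "card B \<le> card (B \<inter> IH V E {u, v})" by (rule B_min)
  then have "B \<subseteq> IH V E {u, v}" using card_seteq[OF \<open>finite B\<close>] by blast
  moreover have "basic_set V E B" unfolding basic_set_def
  proof (intro conjI)
    show "B \<in> Comp V E" using B by blast
    have "card {u, v} \<le> card B" using card_mono[OF \<open>finite B\<close>] B by simp
    then show "card B > 1" using uvV(2) by simp
    show "\<not> (\<exists>F\<subseteq>Comp V E. (\<forall>A\<in>F. A \<subset> B) \<and> connected_family F \<and> \<Union>F = B)"
    proof
      assume "\<exists>F\<subseteq>Comp V E. (\<forall>A\<in>F. A \<subset> B) \<and> connected_family F \<and> \<Union>F = B"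
      then obtain F where F: "F \<subseteq> Comp V E" "\<forall>A\<in>F. A \<subset> B" "connected_family F" "\<Union>F = B"
        by blast
      have "A \<subseteq> V \<and> induces_connected T A" if "A \<in> F" for A
        using F(1) that Comp_subtree by blast
      moreover have "u \<in> \<Union>F" "v \<in> \<Union>F" using F(4) B by blast+
      ultimately obtain A where A: "A \<in> F" "u \<in> A" "v \<in> A"
        using connected_family_contains_edge[OF uv F(3)] by blast
      then have "card B \<le> card A" using F(1) by (intro B_min) blast
      moreover have "card A < card B" using psubset_card_mono[OF \<open>finite B\<close>] F(2) A(1) by blast
      ultimately show False by simp
    qed
  qed
  ultimately show ?thesis using B by blast
qed

lemma basic_set_subset_IH:
  assumes basic: "basic_set V E B"
  shows "\<exists>u v. {u, v} \<in> T \<and> u \<in> B \<and> v \<in> B \<and> B \<subseteq> IH V E {u, v}"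
proof (rule ccontr)
  assume no_edge: "\<not> ?thesis"
  have B: "B \<in> Comp V E" "card B > 1"
    and indecomposable: "\<not> (\<exists>F\<subseteq>Comp V E. (\<forall>A\<in>F. A \<subset> B) \<and> connected_family F \<and> \<Union>F = B)"
    using basic by (auto simp: basic_set_def)
  have B_V: "B \<subseteq> V" and B_conn: "induces_connected T B" using Comp_subtree[OF B(1)] by auto
  have "finite B" using finite_vertices B_V by (rule rev_finite_subset)
  have "\<not> (\<forall>a\<in>B. \<forall>b\<in>B. a = b)" using B(2) card_le_Suc0_iff_eq[OF \<open>finite B\<close>] by simp
  then obtain a b where ab: "a \<in> B" "b \<in> B" "a \<noteq> b" by blast
  have f: "u \<in> IH V E {u, v} \<inter> B \<and> v \<in> IH V E {u, v} \<inter> B \<and> IH V E {u, v} \<inter> B \<subseteq> B"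
    if "{u, v} \<in> T" "u \<in> B" "v \<in> B" for u v
    using that subset_IH[of "{u, v}" V E] B_V by blast
  let ?F = "{IH V E {u, v} \<inter> B | u v. {u, v} \<in> T \<and> u \<in> B \<and> v \<in> B}"
  have "connected_family ?F" "\<Union>?F = B"
    using connected_family_edge_sets[OF B_conn \<open>finite B\<close> ab,
        where f = "\<lambda>u v. IH V E {u, v} \<inter> B", OF f] by simp_all
  moreover have "?F \<subseteq> Comp V E"
  proof
    fix A assume "A \<in> ?F"
    then obtain u v where A: "A = IH V E {u, v} \<inter> B" "{u, v} \<in> T" "u \<in> B" "v \<in> B" by blast
    have "{u, v} \<subseteq> V" using A(3,4) B_V by blast
    then have "IH V E {u, v} \<in> Comp V E" by (rule IH_in_Comp[OF hypergraph]) simp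
    with B(1) show "A \<in> Comp V E" using Comp_Int f[OF A(2-4)] A(1) by blast
  qed
  moreover have "\<forall>A\<in>?F. A \<subset> B"
  proof
    fix A assume "A \<in> ?F"
    then obtain u v where A: "A = IH V E {u, v} \<inter> B" "{u, v} \<in> T" "u \<in> B" "v \<in> B" by blast
    with no_edge have "\<not> B \<subseteq> IH V E {u, v}" by blast
    with A(1) show "A \<subset> B" by blast
  qed
  ultimately have "?F \<subseteq> Comp V E \<and> (\<forall>A\<in>?F. A \<subset> B) \<and> connected_family ?F \<and> \<Union>?F = B"
    by simp
  then have "\<exists>F\<subseteq>Comp V E. (\<forall>A\<in>F. A \<subset> B) \<and> connected_family F \<and> \<Union>F = B" by (rule exI)
  with indecomposable show False by (rule notE)
qed

lemma basic_set_eq_IH: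
  assumes basic: "basic_set V E B" and "B \<noteq> V"
  shows "\<exists>u v. {u, v} \<in> T \<and> u \<in> B \<and> v \<in> B \<and> B = IH V E {u, v}"
proof -
  obtain u v where uv: "{u, v} \<in> T" "u \<in> B" "v \<in> B" "B \<subseteq> IH V E {u, v}"
    using basic_set_subset_IH[OF basic] by blast
  have "B \<in> Comp V E" "\<And>w. B \<noteq> {w}" using basic by (auto simp: basic_set_def)
  with \<open>B \<noteq> V\<close> have "B \<in> comp_gen E" by (auto simp: Comp_def)
  with uv have "IH V E {u, v} \<subseteq> B" using IH_subset_comp_gen by blast
  with uv show ?thesis by blast
qed

lemma basic_set_condition_iff_tree_edge_condition:
  "basic_set_condition V E \<longleftrightarrow> tree_edge_condition V E T"
proof
  assume cond: "basic_set_condition V E"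
  show "tree_edge_condition V E T" unfolding tree_edge_condition_def
  proof (intro allI impI ballI)
    fix u v x assume uv: "{u, v} \<in> T" and x: "x \<in> V" "x \<notin> IH V E {u, v}"
    obtain B where B: "basic_set V E B" "u \<in> B" "v \<in> B" "B \<subseteq> IH V E {u, v}"
      using basic_set_between[OF uv] by blast
    with x have "x \<notin> B" by blast
    with basic_set_conditionD[OF cond B(1) x(1)] B(2,3)
    show "\<exists>y\<in>V. (\<exists>e\<in>E. {u, v, y} \<subseteq> e) \<and> \<not> (\<exists>e\<in>E. {x, y} \<subseteq> e)" by blast
  qed
next
  assume cond: "tree_edge_condition V E T"
  show "basic_set_condition V E" unfolding basic_set_condition_def
  proof (intro allI impI ballI)
    fix B x assume B: "basic_set V E B" and x: "x \<in> V" "x \<notin> B"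
    then obtain u v where uv: "{u, v} \<in> T" "u \<in> B" "v \<in> B" "B = IH V E {u, v}"
      using basic_set_eq_IH by blast
    then obtain y e where y: "y \<in> V" "e \<in> E" "{u, v, y} \<subseteq> e" "\<not> (\<exists>e\<in>E. {x, y} \<subseteq> e)"
      using tree_edge_conditionD[OF cond uv(1) x(1)] x(2) by blast
    then have "insert y B \<subseteq> e" using IH_subset_edge[OF y(2), of "{u, v}"] uv(4) by blast
    with y show "\<exists>y\<in>V. (\<exists>e\<in>E. insert y B \<subseteq> e) \<and> \<not> (\<exists>e\<in>E. {x, y} \<subseteq> e)" by blast
  qed
qed

end

theorem mainTheorem8:
  assumes "hypertree V E"
    and "host_tree V E T"
  shows "(basic_hypertree V E \<longleftrightarrow>
            (\<forall>u v. {u, v} \<in> T \<longrightarrow>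
               (\<forall>x\<in>V. x \<notin> IH V E {u, v} \<longrightarrow>
                  (\<exists>y\<in>V. (\<exists>e\<in>E. {u, v, y} \<subseteq> e) \<and> \<not> (\<exists>e\<in>E. {x, y} \<subseteq> e)))))
       \<and> (basic_hypertree V E \<longleftrightarrow>
            (\<forall>B. basic_set V E B \<longrightarrow>
               (\<forall>x\<in>V. x \<notin> B \<longrightarrow>
                  (\<exists>y\<in>V. (\<exists>e\<in>E. insert y B \<subseteq> e) \<and> \<not> (\<exists>e\<in>E. {x, y} \<subseteq> e)))))"
proof -
  interpret hosted_hypergraph V E T
    using assms by unfold_locales (simp_all add: hypertree_def)
  have "basic_hypertree V E \<longleftrightarrow> tree_edge_condition V E T"
    using assms(1) tree_edge_condition_imp_equivalent equivalent_imp_tree_edge_condition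
    unfolding basic_hypertree_def by blast
  with basic_set_condition_iff_tree_edge_condition show ?thesis
    unfolding tree_edge_condition_def basic_set_condition_def by blast
qed

end
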